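(* Let $n\geq 2$ be an integer and let $D\subset\{0,1,\ldots,n^2\}$ satisfy $|d-d'|\neq 1$ for all $d,d'\in D$. Let $k\ge1$ and let $(d_1,\ldots,d_k),(d_1',\ldots,d_k')\in D^k$ with $d_j\neq d_j'$ for some $1\le j\le k$. Then the $k$-tiles $T_{d_1,\ldots,d_k}$ and $T_{d_1',\ldots,d_k'}$ of $T_n$ are disjoint.
   Context: Let $b:=-n+i$. $T_n$ is the attractor of $\{z\mapsto b^{-1}(z+d): d\in\{0,1,\ldots,n^2\}\}$, i.e. $T_n=\{\sum_{j\ge1}d_jb^{-j}: d_j\in\{0,\ldots,n^2\}\}$. For $d_1,\ldots,d_k\in\{0,\ldots,n^2\}$, the $k$-tile $T_{d_1,\ldots,d_k}$ is $\{\sum_{j=1}^k d_jb^{-j}+b^{-k}t: t\in T_n\}$. *)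

theory Defs
  imports "HOL-Analysis.Analysis"
begin

definition base :: "nat \<Rightarrow> complex" where
  "base n = - of_nat n + \<i>"

text \<open>T_n = { sum_{j>=1} d_j b^{-j} : d_j in {0..n^2} }; here the digit sequence is
  indexed from 0, with d 0 playing the role of d_1.\<close>
definition Tn :: "nat \<Rightarrow> complex set" where
  "Tn n = {(\<Sum>j. of_nat (d j) / base n ^ (Suc j)) | d. \<forall>j. d j \<in> {0..n^2}}"

definition tile :: "nat \<Rightarrow> nat list \<Rightarrow> complex set" where
  "tile n ds = {(\<Sum>j<length ds. of_nat (ds ! j) / base n ^ (Suc j)) + t / base n ^ length ds
                 | t. t \<in> Tn n}"

end

theory Submission
  imports Defs
begin

text \<open>If the two tiles met, two digit sequences with entries in \<open>{0..n^2}\<close> would have the same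
  expansion in base \<open>b = -n + i\<close> and would first differ at a position where the digits differ
  by at least 2. Their difference \<open>G\<close>, cut off before that position, has entries bounded by
  \<open>n^2\<close> and expansion 0. Shifting twice turns this into an expansion equal to
  \<open>-b G_0 - G_1\<close>, whose imaginary part is \<open>-G_0\<close>. But expansions with digits bounded by \<open>n^2\<close>
  have imaginary part less than 2 for \<open>n \<ge> 3\<close> (and less than 3 for \<open>n = 2\<close>, where one more
  shift excludes \<open>|G_0| = 2\<close>), so \<open>|G_0| \<le> 1\<close>.\<close>

definition expansion :: "nat \<Rightarrow> (nat \<Rightarrow> int) \<Rightarrow> complex" where
  "expansion n G = (\<Sum>j. of_int (G j) / base n ^ Suc j)"

definition prepend_digits :: "nat list \<Rightarrow> (nat \<Rightarrow> nat) \<Rightarrow> nat \<Rightarrow> nat" where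
  "prepend_digits ds d j = (if j < length ds then ds ! j else d (j - length ds))"

lemma Re_base [simp]: "Re (base n) = - real n" and Im_base [simp]: "Im (base n) = 1"
  by (simp_all add: base_def)

lemma norm_base_power2: "(cmod (base n))\<^sup>2 = (real n)\<^sup>2 + 1"
  by (simp add: cmod_power2)

lemma norm_base_ge: "real n \<le> cmod (base n)"
  using abs_Re_le_cmod[of "base n"] by simp

lemma base_nonzero: "base n \<noteq> 0"
  unfolding base_def by (simp add: complex_eq_iff)

lemma Im_of_int_div_base: "Im (of_int g / base n) = - of_int g / ((real n)\<^sup>2 + 1)"
  by (simp add: Im_divide)

lemma Im_of_int_div_base_power2:
  "Im (of_int g / base n ^ 2) = 2 * real n * of_int g / ((real n)\<^sup>2 + 1)\<^sup>2"
proof -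
  have "(Re (base n ^ 2))\<^sup>2 + (Im (base n ^ 2))\<^sup>2 = ((real n)\<^sup>2 + 1)\<^sup>2"
    by (simp add: Re_power2 Im_power2 power2_eq_square algebra_simps)
  then show ?thesis
    by (simp add: Im_divide Re_power2 Im_power2)
qed

lemma geometric_tail_sums:
  assumes "2 \<le> n"
  shows "(\<lambda>j. (1 / real n) ^ Suc j) sums (1 / (real n - 1))"
proof -
  have "(\<lambda>j. 1 / real n * (1 / real n) ^ j) sums (1 / real n * (1 / (1 - 1 / real n)))"
    using assms by (intro sums_mult[OF geometric_sums]) simp
  moreover have "1 / real n * (1 / (1 - 1 / real n)) = 1 / (real n - 1)"
    using assms by (simp add: field_simps)
  ultimately show ?thesis by simp
qed

lemma norm_expansion_term_le:
  assumes "0 < n" and "\<bar>g\<bar> \<le> M"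
  shows "norm (of_int g / base n ^ Suc j) \<le> of_int M * (1 / real n) ^ Suc j"
proof -
  have "norm (of_int g / base n ^ Suc j) = \<bar>of_int g\<bar> / cmod (base n) ^ Suc j"
    by (simp only: norm_divide norm_power norm_of_int)
  also have "\<dots> \<le> of_int M / real n ^ Suc j"
    using assms by (intro frac_le power_mono norm_base_ge) auto
  finally show ?thesis by (simp add: power_one_over)
qed

lemma
  assumes "2 \<le> n" and "\<forall>j. \<bar>G j\<bar> \<le> M"
  shows summable_expansion: "summable (\<lambda>j. of_int (G j) / base n ^ Suc j)"
    and norm_expansion_le: "norm (expansion n G) \<le> of_int M / (real n - 1)"
proof -
  have le: "norm (of_int (G j) / base n ^ Suc j) \<le> of_int M * (1 / real n) ^ Suc j" for j
    using assms by (intro norm_expansion_term_le) auto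
  have geo: "(\<lambda>j. of_int M * (1 / real n) ^ Suc j) sums (of_int M * (1 / (real n - 1)))"
    using geometric_tail_sums[OF assms(1)] by (rule sums_mult)
  show "summable (\<lambda>j. of_int (G j) / base n ^ Suc j)"
    using sums_summable[OF geo] le by (rule summable_comparison_test')
  have "norm (expansion n G) \<le> (\<Sum>j. of_int M * (1 / real n) ^ Suc j)"
    unfolding expansion_def using le sums_summable[OF geo] by (rule norm_suminf_le)
  also have "\<dots> = of_int M / (real n - 1)"
    using geo by (simp add: sums_iff)
  finally show "norm (expansion n G) \<le> of_int M / (real n - 1)" .
qed

lemma expansion_diff:
  assumes "2 \<le> n" and "\<forall>j. \<bar>G j\<bar> \<le> M" and "\<forall>j. \<bar>H j\<bar> \<le> M"
  shows "expansion n (\<lambda>j. G j - H j) = expansion n G - expansion n H"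
  unfolding expansion_def
  using suminf_diff[OF summable_expansion[OF assms(1,2)] summable_expansion[OF assms(1,3)]]
  by (simp add: diff_divide_distrib)

lemma expansion_shift:
  assumes "2 \<le> n" and "\<forall>j. \<bar>G j\<bar> \<le> M"
  shows "expansion n (\<lambda>j. G (Suc j)) = base n * expansion n G - of_int (G 0)"
proof -
  let ?f = "\<lambda>j. of_int (G j) / base n ^ Suc j"
  have "summable (\<lambda>j. of_int (G (Suc j)) / base n ^ Suc j)"
    using assms by (intro summable_expansion) auto
  then have "expansion n (\<lambda>j. G (Suc j)) / base n
      = (\<Sum>j. of_int (G (Suc j)) / base n ^ Suc j / base n)"
    unfolding expansion_def by (rule suminf_divide[symmetric])
  also have "\<dots> = (\<Sum>j. ?f (Suc j))"
    by (simp add: divide_divide_eq_left mult.commute)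
  also have "\<dots> = expansion n G - ?f 0"
    unfolding expansion_def using summable_expansion[OF assms] by (rule suminf_split_head)
  finally show ?thesis
    using base_nonzero[of n] by (simp add: field_simps)
qed

lemma expansion_shift_zero:
  assumes "2 \<le> n" and "\<forall>j. \<bar>G j\<bar> \<le> M"
    and "expansion n G = 0" and "\<forall>j<i. G j = 0"
  shows "expansion n (\<lambda>j. G (j + i)) = 0"
  using assms(4)
proof (induction i)
  case 0
  then show ?case using assms(3) by simp
next
  case (Suc i)
  have "expansion n (\<lambda>j. G (j + Suc i)) = expansion n (\<lambda>j. G (Suc j + i))"
    by simp
  also have "\<dots> = base n * expansion n (\<lambda>j. G (j + i)) - of_int (G i)"
    using expansion_shift[OF assms(1), of "\<lambda>j. G (j + i)" M] assms(2) by simp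
  also have "\<dots> = 0"
    using Suc by simp
  finally show ?case .
qed

text \<open>The three summands bound the imaginary parts of the first two terms of an expansion and
  the norm of the remainder.\<close>

definition Im_expansion_bound :: "nat \<Rightarrow> real" where
  "Im_expansion_bound n = (real n)\<^sup>2 / ((real n)\<^sup>2 + 1) + 2 * real n ^ 3 / ((real n)\<^sup>2 + 1)\<^sup>2
     + (real n)\<^sup>2 / ((real n - 1) * ((real n)\<^sup>2 + 1))"

lemma abs_Im_expansion_le:
  assumes "2 \<le> n" and G: "\<forall>j. \<bar>G j\<bar> \<le> int n ^ 2"
  shows "\<bar>Im (expansion n G)\<bar> \<le> Im_expansion_bound n"
proof -
  let ?b = "base n" and ?N = "(real n)\<^sup>2 + 1"
  define R where "R = expansion n (\<lambda>j. G (Suc (Suc j)))"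
  have "expansion n G = (of_int (G 0) + expansion n (\<lambda>j. G (Suc j))) / ?b"
    using expansion_shift[OF assms] base_nonzero[of n] by (simp add: field_simps)
  moreover have "expansion n (\<lambda>j. G (Suc j)) = (of_int (G 1) + R) / ?b"
    unfolding R_def using expansion_shift[OF assms(1), of "\<lambda>j. G (Suc j)" "int n ^ 2"] G
      base_nonzero[of n] by (simp add: field_simps)
  ultimately have split: "expansion n G = of_int (G 0) / ?b + of_int (G 1) / ?b ^ 2 + R / ?b ^ 2"
    by (simp add: add_divide_distrib power2_eq_square)
  have digit_le: "\<bar>of_int (G j)\<bar> \<le> (real n)\<^sup>2" for j
    using G by (metis of_int_abs of_int_le_iff of_int_of_nat_eq of_int_power)
  then have digit0: "\<bar>Im (of_int (G 0) / ?b)\<bar> \<le> (real n)\<^sup>2 / ?N"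
    by (simp add: Im_of_int_div_base abs_divide divide_right_mono)
  have "\<bar>Im (of_int (G 1) / ?b ^ 2)\<bar> = 2 * real n * \<bar>of_int (G 1)\<bar> / ?N\<^sup>2"
    by (simp add: Im_of_int_div_base_power2 abs_mult abs_divide)
  also have "\<dots> \<le> 2 * real n * (real n)\<^sup>2 / ?N\<^sup>2"
    using digit_le by (intro divide_right_mono mult_left_mono) auto
  finally have digit1: "\<bar>Im (of_int (G 1) / ?b ^ 2)\<bar> \<le> 2 * real n ^ 3 / ?N\<^sup>2"
    by (simp add: power3_eq_cube power2_eq_square mult.assoc)
  have "norm R \<le> (real n)\<^sup>2 / (real n - 1)"
    unfolding R_def using norm_expansion_le[OF assms(1), of "\<lambda>j. G (Suc (Suc j))" "int n ^ 2"] G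
    by simp
  then have "norm R / ?N \<le> (real n)\<^sup>2 / ((real n - 1) * ?N)"
    by (simp add: divide_right_mono flip: divide_divide_eq_left)
  then have "\<bar>Im (R / ?b ^ 2)\<bar> \<le> (real n)\<^sup>2 / ((real n - 1) * ?N)"
    using abs_Im_le_cmod[of "R / ?b ^ 2"] by (simp add: norm_divide norm_power norm_base_power2)
  with digit0 digit1 show ?thesis
    unfolding split Im_expansion_bound_def by simp
qed

lemma Im_expansion_bound_2: "Im_expansion_bound 2 < 3"
  by (simp add: Im_expansion_bound_def)

lemma Im_expansion_bound_lt_2:
  assumes "3 \<le> n"
  shows "Im_expansion_bound n < 2"
proof (cases "n = 3")
  case True
  then show ?thesis by (simp add: Im_expansion_bound_def)
next
  case False
  then have n: "4 \<le> real n" using assms by simp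
  let ?N = "(real n)\<^sup>2 + 1"
  have "0 < ?N"
    by (simp add: add_nonneg_pos)
  then have first: "(real n)\<^sup>2 / ?N < 1"
    by (simp add: divide_less_eq)
  have "2 * real n ^ 3 / ?N\<^sup>2 \<le> 2 * real n ^ 3 / ((real n)\<^sup>2)\<^sup>2"
    using n \<open>0 < ?N\<close> by (intro divide_left_mono power_mono mult_pos_pos zero_less_power) auto
  also have "\<dots> = 2 / real n"
    using n by (simp add: power2_eq_square power3_eq_cube)
  also have "\<dots> \<le> 1 / 2"
    using n by (simp add: field_simps)
  finally have second: "2 * real n ^ 3 / ?N\<^sup>2 \<le> 1 / 2" .
  have "(real n)\<^sup>2 / ((real n - 1) * ?N) = (real n)\<^sup>2 / ?N / (real n - 1)"
    by (simp add: divide_divide_eq_left mult.commute)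
  also have "\<dots> \<le> 1 / (real n - 1)"
    using first n by (intro divide_right_mono) auto
  also have "\<dots> \<le> 1 / 3"
    using n by (simp add: field_simps)
  finally have third: "(real n)\<^sup>2 / ((real n - 1) * ?N) \<le> 1 / 3" .
  show ?thesis
    using first second third unfolding Im_expansion_bound_def by linarith
qed

lemma zero_expansion_leading_digit:
  assumes n: "2 \<le> n" and G: "\<forall>j. \<bar>G j\<bar> \<le> int n ^ 2" and zero: "expansion n G = 0"
  shows "\<bar>G 0\<bar> \<le> 1"
proof (rule ccontr)
  assume "\<not> \<bar>G 0\<bar> \<le> 1"
  then have G0: "2 \<le> \<bar>G 0\<bar>" by simp
  have "expansion n (\<lambda>j. G (Suc j)) = - of_int (G 0)"
    using expansion_shift[OF n G] zero by simp
  then have E2: "expansion n (\<lambda>j. G (Suc (Suc j))) = - base n * of_int (G 0) - of_int (G 1)"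
    using expansion_shift[OF n, of "\<lambda>j. G (Suc j)" "int n ^ 2"] G by simp
  then have E3: "expansion n (\<lambda>j. G (Suc (Suc (Suc j))))
      = base n * (- base n * of_int (G 0) - of_int (G 1)) - of_int (G 2)"
    using expansion_shift[OF n, of "\<lambda>j. G (Suc (Suc j))" "int n ^ 2"] G
    by (simp add: numeral_2_eq_2)
  have bound: "of_int \<bar>G 0\<bar> \<le> Im_expansion_bound n"
    using abs_Im_expansion_le[OF n, of "\<lambda>j. G (Suc (Suc j))"] G E2 by simp
  moreover have "2 \<le> real_of_int \<bar>G 0\<bar>"
    using G0 by simp
  ultimately have "n = 2"
    using Im_expansion_bound_lt_2[of n] n by (cases "3 \<le> n") auto
  with bound Im_expansion_bound_2 have "real_of_int \<bar>G 0\<bar> < 3"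
    by simp
  with G0 have "\<bar>G 0\<bar> = 2"
    by simp
  have "\<bar>G 1\<bar> \<le> 4"
    using G \<open>n = 2\<close> by simp
  then have "4 \<le> \<bar>4 * G 0 - G 1\<bar>"
    using \<open>\<bar>G 0\<bar> = 2\<close> by linarith
  moreover have "Im (expansion n (\<lambda>j. G (Suc (Suc (Suc j))))) = of_int (4 * G 0 - G 1)"
    using E3 \<open>n = 2\<close> by simp
  then have "of_int \<bar>4 * G 0 - G 1\<bar> \<le> Im_expansion_bound 2"
    using abs_Im_expansion_le[OF n, of "\<lambda>j. G (Suc (Suc (Suc j)))"] G \<open>n = 2\<close> by simp
  ultimately show False
    using Im_expansion_bound_2 by linarith
qed

lemma expansion_prepend_digits:
  assumes "2 \<le> n" and "\<forall>j. d j \<le> n ^ 2"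
  shows "expansion n (\<lambda>j. int (prepend_digits ds d j))
    = (\<Sum>j<length ds. of_nat (ds ! j) / base n ^ Suc j)
      + (\<Sum>j. of_nat (d j) / base n ^ Suc j) / base n ^ length ds"
proof -
  let ?k = "length ds"
  let ?f = "\<lambda>j. of_int (int (prepend_digits ds d j)) / base n ^ Suc j"
  have "summable (\<lambda>j. of_int (int (d j)) / base n ^ Suc j)"
    using assms by (intro summable_expansion[of n _ "int n ^ 2"]) (simp_all flip: of_nat_power)
  then have "(\<lambda>j. of_nat (d j) / base n ^ Suc j / base n ^ ?k)
      sums ((\<Sum>j. of_nat (d j) / base n ^ Suc j) / base n ^ ?k)"
    by (intro sums_divide summable_sums) simp
  moreover have "(\<lambda>j. ?f (j + ?k)) = (\<lambda>j. of_nat (d j) / base n ^ Suc j / base n ^ ?k)"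
    by (simp add: prepend_digits_def power_add field_simps)
  moreover have "sum ?f {..<?k} = (\<Sum>j<?k. of_nat (ds ! j) / base n ^ Suc j)"
    by (simp add: prepend_digits_def)
  ultimately have "?f sums ((\<Sum>j. of_nat (d j) / base n ^ Suc j) / base n ^ ?k
      + (\<Sum>j<?k. of_nat (ds ! j) / base n ^ Suc j))"
    using sums_iff_shift[of ?f ?k] by simp
  then show ?thesis
    unfolding expansion_def by (simp add: sums_iff add.commute)
qed

lemma tile_eq_expansions:
  assumes "2 \<le> n"
  shows "tile n ds = (\<lambda>d. expansion n (\<lambda>j. int (prepend_digits ds d j))) ` {d. \<forall>j. d j \<le> n ^ 2}"
proof -
  have "tile n ds = (\<lambda>d. (\<Sum>j<length ds. of_nat (ds ! j) / base n ^ Suc j)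
      + (\<Sum>j. of_nat (d j) / base n ^ Suc j) / base n ^ length ds) ` {d. \<forall>j. d j \<le> n ^ 2}"
    unfolding tile_def Tn_def by auto
  also have "\<dots> = (\<lambda>d. expansion n (\<lambda>j. int (prepend_digits ds d j))) ` {d. \<forall>j. d j \<le> n ^ 2}"
    using expansion_prepend_digits[OF assms] by (intro image_cong) simp_all
  finally show ?thesis .
qed

lemma prepend_digits_nth [simp]: "j < length ds \<Longrightarrow> prepend_digits ds d j = ds ! j"
  by (simp add: prepend_digits_def)

lemma prepend_digits_le:
  assumes "\<forall>j. d j \<le> N" and "\<forall>x\<in>set ds. x \<le> N"
  shows "prepend_digits ds d j \<le> N"
  using assms by (simp add: prepend_digits_def)

lemma equal_expansions_first_difference:
  assumes n: "2 \<le> n" and A: "\<forall>j. A j \<le> n ^ 2" and B: "\<forall>j. B j \<le> n ^ 2"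
    and same: "expansion n (\<lambda>j. int (A j)) = expansion n (\<lambda>j. int (B j))"
    and before: "\<forall>j<i. A j = B j"
  shows "\<bar>int (A i) - int (B i)\<bar> \<le> 1"
proof -
  define G where "G j = int (A j) - int (B j)" for j
  have le: "int (A j) \<le> int n ^ 2" "int (B j) \<le> int n ^ 2" for j
    using A B by (simp_all flip: of_nat_power)
  then have G_bound: "\<forall>j. \<bar>G j\<bar> \<le> int n ^ 2"
    unfolding G_def by (smt (verit) of_nat_0_le_iff)
  have "expansion n G = 0"
    unfolding G_def using expansion_diff[of n "\<lambda>j. int (A j)" "int n ^ 2"] le n same by simp
  moreover have "\<forall>j<i. G j = 0"
    using before by (simp add: G_def)
  ultimately have "expansion n (\<lambda>j. G (j + i)) = 0"
    by (rule expansion_shift_zero[OF n G_bound])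
  then show ?thesis
    using zero_expansion_leading_digit[OF n, of "\<lambda>j. G (j + i)"] G_bound by (simp add: G_def)
qed

theorem lemma4p4:
  fixes n k :: nat and D :: "nat set" and ds ds' :: "nat list"
  assumes "n \<ge> 2"
    and "D \<subseteq> {0..n^2}"
    and "\<forall>d\<in>D. \<forall>d'\<in>D. \<bar>int d - int d'\<bar> \<noteq> 1"
    and "k \<ge> 1"
    and "length ds = k" and "length ds' = k"
    and "set ds \<subseteq> D" and "set ds' \<subseteq> D"
    and "\<exists>j<k. ds ! j \<noteq> ds' ! j"
  shows "tile n ds \<inter> tile n ds' = {}"
proof (rule ccontr)
  assume "tile n ds \<inter> tile n ds' \<noteq> {}"
  then obtain d d' where "\<forall>j. d j \<le> n ^ 2" "\<forall>j. d' j \<le> n ^ 2"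
    and same: "expansion n (\<lambda>j. int (prepend_digits ds d j))
      = expansion n (\<lambda>j. int (prepend_digits ds' d' j))"
    unfolding tile_eq_expansions[OF assms(1)] by blast
  then have digits: "\<forall>j. prepend_digits ds d j \<le> n ^ 2" "\<forall>j. prepend_digits ds' d' j \<le> n ^ 2"
    using assms(2,7,8) by (auto intro!: prepend_digits_le)
  obtain i where i: "i < k" "ds ! i \<noteq> ds' ! i" and before: "\<forall>j<i. ds ! j = ds' ! j"
    using assms(9) exists_least_iff[of "\<lambda>j. j < k \<and> ds ! j \<noteq> ds' ! j"] by (meson order.strict_trans)
  have "\<bar>int (ds ! i) - int (ds' ! i)\<bar> \<le> 1"
    using equal_expansions_first_difference[OF assms(1) digits same, of i] before i(1) assms(5,6)
    by simp
  moreover have "ds ! i \<in> D" and "ds' ! i \<in> D"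
    using assms(5-8) i(1) by (auto intro: nth_mem)
  ultimately show False
    using assms(3) i(2) by force
qed

end
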